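(* The price of anarchy (supremum over all weights $w_1,w_2\ge0$ with $w_1+w_2>0$ and all instances, with respect to pure Nash equilibria) for symmetric simultaneous two-player weighted congestion games with affine costs and uniform cost functions is equal to $2$.
   Context: A weighted two-player congestion game with affine costs consists of a finite set $R$ of resources, coefficients $\alpha_r,\beta_r \geq 0$ for each $r\in R$, two players $i=1,2$ with weights $w_i\ge 0$, and for each player $i$ a nonempty finite set $\mathcal{A}_i \subseteq 2^R$ of actions; it is symmetric if $\mathcal{A}_1=\mathcal{A}_2$. For an action profile $A=(A_1,A_2)$ the load of $r$ is $x_r(A)=\sum_{j:\, r\in A_j} w_j$. With uniform costs, player $i$ pays $C_i(A)=\sum_{r\in A_i}(\alpha_r+\beta_r x_r(A))$. The social cost is $C(A)=C_1(A)+C_2(A)$. A pure Nash equilibrium is a profile from which no player can lower her cost by unilaterally changing her action. The price of anarchy of an instance is the maximum over Nash equilibria $A$ of $C(A)/\min_{A'} C(A')$; the price of anarchy of a class is the supremum over all instances (with positive optimal social cost). *)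

theory Defs
  imports Complex_Main "HOL-Library.Extended_Real"
begin

text \<open>Resources are labelled by natural numbers (any finite resource set can be relabelled).\<close>

record game =
  res   :: "nat set"
  alpha :: "nat \<Rightarrow> real"
  beta  :: "nat \<Rightarrow> real"
  w1    :: real
  w2    :: real
  acts  :: "nat set set"

definition valid_game :: "game \<Rightarrow> bool" where
  "valid_game G \<longleftrightarrow> finite (res G)
     \<and> (\<forall>r\<in>res G. alpha G r \<ge> 0 \<and> beta G r \<ge> 0)
     \<and> w1 G \<ge> 0 \<and> w2 G \<ge> 0 \<and> w1 G + w2 G > 0
     \<and> finite (acts G) \<and> acts G \<noteq> {} \<and> (\<forall>A\<in>acts G. A \<subseteq> res G)"

type_synonym profile = "nat set \<times> nat set"

definition load :: "game \<Rightarrow> profile \<Rightarrow> nat \<Rightarrow> real" where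
  "load G P r = (if r \<in> fst P then w1 G else 0) + (if r \<in> snd P then w2 G else 0)"

definition cost1 :: "game \<Rightarrow> profile \<Rightarrow> real" where
  "cost1 G P = (\<Sum>r\<in>fst P. alpha G r + beta G r * load G P r)"

definition cost2 :: "game \<Rightarrow> profile \<Rightarrow> real" where
  "cost2 G P = (\<Sum>r\<in>snd P. alpha G r + beta G r * load G P r)"

definition social_cost :: "game \<Rightarrow> profile \<Rightarrow> real" where
  "social_cost G P = cost1 G P + cost2 G P"

definition profiles :: "game \<Rightarrow> profile set" where
  "profiles G = acts G \<times> acts G"

definition pure_NE :: "game \<Rightarrow> profile \<Rightarrow> bool" where
  "pure_NE G P \<longleftrightarrow> P \<in> profiles G
     \<and> (\<forall>B\<in>acts G. cost1 G P \<le> cost1 G (B, snd P))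
     \<and> (\<forall>B\<in>acts G. cost2 G P \<le> cost2 G (fst P, B))"

definition opt_cost :: "game \<Rightarrow> real" where
  "opt_cost G = Min (social_cost G ` profiles G)"

definition poa_instance :: "game \<Rightarrow> ereal" where
  "poa_instance G = (SUP P\<in>{P. pure_NE G P}. ereal (social_cost G P / opt_cost G))"

definition poa_class :: ereal where
  "poa_class = (SUP G\<in>{G. valid_game G \<and> opt_cost G > 0}. poa_instance G)"

end

theory Submission
  imports Defs
begin

text \<open>Upper bound: write \<open>W = w\<^sub>1 + w\<^sub>2\<close> and let \<open>(O\<^sub>1, O\<^sub>2)\<close> be optimal. At a Nash
  equilibrium each player could deviate to \<open>O\<^sub>1\<close> or to \<open>O\<^sub>2\<close>, and any deviation to \<open>B\<close> costs
  at most the cost of \<open>B\<close> under the full load \<open>W\<close>. Averaging the two deviations with weights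
  \<open>w\<^sub>1, w\<^sub>2\<close> and using \<open>w\<^sub>i (\<alpha> + \<beta> W) \<le> W (\<alpha> + \<beta> w\<^sub>i)\<close> bounds each player's equilibrium cost
  by the optimum, so the social cost is at most twice the optimum.
  Lower bound: a player of weight 0 still pays \<open>\<beta>\<close> per unit of the other player's load, so
  sharing a resource of cost \<open>x\<close> with a player of weight 1 is an equilibrium of cost 2,
  while moving the weight-1 player to a resource of constant cost 1 yields cost 1.\<close>

definition cost_at_load :: "game \<Rightarrow> nat set \<Rightarrow> real \<Rightarrow> real" where
  "cost_at_load G B x = (\<Sum>r\<in>B. alpha G r + beta G r * x)"

lemma valid_gameD:
  assumes "valid_game G"
  shows "0 \<le> w1 G" "0 \<le> w2 G" "0 < w1 G + w2 G"
    and "\<And>B r. B \<in> acts G \<Longrightarrow> r \<in> B \<Longrightarrow> 0 \<le> alpha G r \<and> 0 \<le> beta G r"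
  using assms unfolding valid_game_def by auto

lemma cost1_bounds:
  assumes "valid_game G" "fst P \<in> acts G"
  shows "cost_at_load G (fst P) (w1 G) \<le> cost1 G P"
    and "cost1 G P \<le> cost_at_load G (fst P) (w1 G + w2 G)"
  unfolding cost1_def cost_at_load_def
  using valid_gameD[OF assms(1)] assms(2)
  by (auto intro!: sum_mono add_left_mono mult_left_mono simp: load_def)

lemma cost2_bounds:
  assumes "valid_game G" "snd P \<in> acts G"
  shows "cost_at_load G (snd P) (w2 G) \<le> cost2 G P"
    and "cost2 G P \<le> cost_at_load G (snd P) (w1 G + w2 G)"
  unfolding cost2_def cost_at_load_def
  using valid_gameD[OF assms(1)] assms(2)
  by (auto intro!: sum_mono add_left_mono mult_left_mono simp: load_def)

lemma scaled_cost_at_load_le: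
  fixes w W :: real
  assumes "\<forall>r\<in>B. 0 \<le> alpha G r" "w \<le> W"
  shows "w * cost_at_load G B W \<le> W * cost_at_load G B w"
  unfolding cost_at_load_def sum_distrib_left
proof (rule sum_mono)
  fix r assume "r \<in> B"
  with assms have "w * alpha G r \<le> W * alpha G r" by (simp add: mult_right_mono)
  then show "w * (alpha G r + beta G r * W) \<le> W * (alpha G r + beta G r * w)"
    by (simp add: algebra_simps)
qed

lemma pure_NE_social_cost_le:
  assumes G: "valid_game G" and NE: "pure_NE G P" and Opt: "Opt \<in> profiles G"
  shows "social_cost G P \<le> 2 * social_cost G Opt"
proof -
  obtain O1 O2 where Opt_eq: "Opt = (O1, O2)" and O1: "O1 \<in> acts G" and O2: "O2 \<in> acts G"
    using Opt unfolding profiles_def by auto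
  define u v W where "u = w1 G" and "v = w2 G" and "W = w1 G + w2 G"
  have u: "0 \<le> u" and v: "0 \<le> v" and W: "0 < W" "W = u + v"
    using valid_gameD[OF G] unfolding u_def v_def W_def by auto
  have \<alpha>: "\<forall>r\<in>B. 0 \<le> alpha G r" if "B \<in> acts G" for B
    using valid_gameD(4)[OF G that] by blast
  have opt: "cost_at_load G O1 u + cost_at_load G O2 v \<le> social_cost G Opt"
    using cost1_bounds(1)[OF G, of Opt] cost2_bounds(1)[OF G, of Opt] O1 O2
    unfolding Opt_eq social_cost_def u_def v_def by simp
  have player: "W * c \<le> W * social_cost G Opt"
    if "c \<le> cost_at_load G O1 W" "c \<le> cost_at_load G O2 W" for c
  proof -
    have "W * c = u * c + v * c" using W by (simp add: algebra_simps)
    also have "\<dots> \<le> u * cost_at_load G O1 W + v * cost_at_load G O2 W"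
      using that u v by (intro add_mono mult_left_mono)
    also have "\<dots> \<le> W * cost_at_load G O1 u + W * cost_at_load G O2 v"
      using W u v \<alpha>[OF O1] \<alpha>[OF O2] by (intro add_mono scaled_cost_at_load_le) auto
    also have "\<dots> \<le> W * social_cost G Opt"
      using opt W by (simp flip: distrib_left)
    finally show ?thesis .
  qed
  obtain A1 A2 where P: "P = (A1, A2)" "A1 \<in> acts G" "A2 \<in> acts G"
    using NE unfolding pure_NE_def profiles_def by auto
  have "cost1 G P \<le> cost_at_load G B W" if "B \<in> acts G" for B
    using NE that cost1_bounds(2)[OF G, of "(B, A2)"] unfolding pure_NE_def P W_def by force
  with O1 O2 have 1: "W * cost1 G P \<le> W * social_cost G Opt" by (intro player)
  have "cost2 G P \<le> cost_at_load G B W" if "B \<in> acts G" for B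
    using NE that cost2_bounds(2)[OF G, of "(A1, B)"] unfolding pure_NE_def P W_def by force
  with O1 O2 have 2: "W * cost2 G P \<le> W * social_cost G Opt" by (intro player)
  from 1 2 W show ?thesis
    unfolding social_cost_def[of G P] by (simp add: distrib_left)
qed

lemma opt_cost_attained:
  assumes "valid_game G"
  obtains Opt where "Opt \<in> profiles G" "opt_cost G = social_cost G Opt"
proof -
  have "finite (social_cost G ` profiles G)" "social_cost G ` profiles G \<noteq> {}"
    using assms unfolding valid_game_def profiles_def by auto
  then show ?thesis using that Min_in unfolding opt_cost_def by blast
qed

lemma poa_instance_le_2:
  assumes G: "valid_game G" and pos: "opt_cost G > 0"
  shows "poa_instance G \<le> 2"
  unfolding poa_instance_def
proof (rule SUP_least)
  fix P assume "P \<in> {P. pure_NE G P}"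
  moreover obtain Opt where "Opt \<in> profiles G" "opt_cost G = social_cost G Opt"
    using opt_cost_attained[OF G] .
  ultimately have "social_cost G P \<le> 2 * opt_cost G"
    using pure_NE_social_cost_le[OF G] by simp
  with pos show "ereal (social_cost G P / opt_cost G) \<le> 2"
    by (simp add: divide_le_eq)
qed

definition tight_game :: game where
  "tight_game = \<lparr>res = {0, 1}, alpha = (\<lambda>r. if r = 1 then 1 else 0),
     beta = (\<lambda>r. if r = 0 then 1 else 0), w1 = 1, w2 = 0, acts = {{0}, {1}}\<rparr>"

lemma profiles_tight_game:
  "profiles tight_game = {({0}, {0}), ({0}, {1}), ({1}, {0}), ({1}, {1})}"
  by (auto simp: profiles_def tight_game_def)

lemma tight_game_facts:
  shows "valid_game tight_game"
    and "opt_cost tight_game = 1"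
    and "pure_NE tight_game ({0}, {0})"
    and "social_cost tight_game ({0}, {0}) = 2"
  unfolding opt_cost_def pure_NE_def profiles_tight_game
  by (simp_all add: valid_game_def social_cost_def cost1_def cost2_def load_def tight_game_def)

lemma poa_class_ge_2: "2 \<le> poa_class"
proof -
  have "ereal (social_cost tight_game ({0}, {0}) / opt_cost tight_game) \<le> poa_instance tight_game"
    unfolding poa_instance_def using tight_game_facts(3) by (intro SUP_upper) simp
  also have "\<dots> \<le> poa_class"
    unfolding poa_class_def using tight_game_facts(1,2) by (intro SUP_upper) simp
  finally show ?thesis using tight_game_facts(2,4) by simp
qed

theorem corollary3:
  shows "poa_class = 2"
proof (rule antisym)
  show "poa_class \<le> 2"
    unfolding poa_class_def using poa_instance_le_2 by (auto intro: SUP_least)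
  show "2 \<le> poa_class" by (rule poa_class_ge_2)
qed

end
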